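(* Let $G$ be a finite group. Then: (a) $\mathrm{Pow}(G)$ is a null graph if and only if $G$ is trivial. (b) $\mathrm{NGen}(G)$ is a complete graph if and only if $G$ is not $2$-generated. (c) $\mathrm{NGen}(G)=\mathrm{Com}(G)$ if and only if $G$ is either abelian and not $2$-generated, or a minimal non-abelian group.
   Context: Graphs have vertex set $G$ and no loops. $\mathrm{Pow}(G)$: distinct $x,y$ adjacent iff one is a power of the other. $\mathrm{Com}(G)$: adjacent iff $xy=yx$. $\mathrm{NGen}(G)$: adjacent iff $\langle x,y\rangle\ne G$. A null graph has no edges. A minimal non-abelian group is a non-abelian group all of whose proper subgroups are abelian. *)

theory Defs
  imports "HOL-Algebra.Algebra"
begin

text \<open>Graphs on the vertex set carrier G, given by a symmetric loop-free adjacency predicate.\<close>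

definition pow_adj :: "('a, 'b) monoid_scheme \<Rightarrow> 'a \<Rightarrow> 'a \<Rightarrow> bool" where
  "pow_adj G x y \<longleftrightarrow> x \<noteq> y \<and>
     ((\<exists>k::int. x = y [^]\<^bsub>G\<^esub> k) \<or> (\<exists>k::int. y = x [^]\<^bsub>G\<^esub> k))"

definition com_adj :: "('a, 'b) monoid_scheme \<Rightarrow> 'a \<Rightarrow> 'a \<Rightarrow> bool" where
  "com_adj G x y \<longleftrightarrow> x \<noteq> y \<and> x \<otimes>\<^bsub>G\<^esub> y = y \<otimes>\<^bsub>G\<^esub> x"

definition ngen_adj :: "('a, 'b) monoid_scheme \<Rightarrow> 'a \<Rightarrow> 'a \<Rightarrow> bool" where
  "ngen_adj G x y \<longleftrightarrow> x \<noteq> y \<and> generate G {x, y} \<noteq> carrier G"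

definition null_graph :: "'a set \<Rightarrow> ('a \<Rightarrow> 'a \<Rightarrow> bool) \<Rightarrow> bool" where
  "null_graph V E \<longleftrightarrow> (\<forall>x\<in>V. \<forall>y\<in>V. \<not> E x y)"

definition complete_graph :: "'a set \<Rightarrow> ('a \<Rightarrow> 'a \<Rightarrow> bool) \<Rightarrow> bool" where
  "complete_graph V E \<longleftrightarrow> (\<forall>x\<in>V. \<forall>y\<in>V. x \<noteq> y \<longrightarrow> E x y)"

definition same_graph :: "'a set \<Rightarrow> ('a \<Rightarrow> 'a \<Rightarrow> bool) \<Rightarrow> ('a \<Rightarrow> 'a \<Rightarrow> bool) \<Rightarrow> bool" where
  "same_graph V E F \<longleftrightarrow> (\<forall>x\<in>V. \<forall>y\<in>V. E x y \<longleftrightarrow> F x y)"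

definition two_generated :: "('a, 'b) monoid_scheme \<Rightarrow> bool" where
  "two_generated G \<longleftrightarrow> (\<exists>x\<in>carrier G. \<exists>y\<in>carrier G. generate G {x, y} = carrier G)"

definition minimal_nonabelian :: "('a, 'b) monoid_scheme \<Rightarrow> bool" where
  "minimal_nonabelian G \<longleftrightarrow> group G \<and> \<not> comm_group G \<and>
     (\<forall>H. subgroup H G \<and> H \<noteq> carrier G \<longrightarrow>
        (\<forall>x\<in>H. \<forall>y\<in>H. x \<otimes>\<^bsub>G\<^esub> y = y \<otimes>\<^bsub>G\<^esub> x))"

end

theory Submission
  imports Defs
begin

text \<open>Every vertex x \<noteq> 1 is a power-graph neighbour of 1 = x^0, so the power graph has an edge
  as soon as the group is nontrivial. A generating pair with x = y can be replaced by the
  distinct pair x, 1, so a nontrivial group is 2-generated iff some two distinct vertices are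
  non-adjacent in the non-generating graph; this gives (b), and also (c) for abelian groups,
  whose commuting graph is complete. For a non-abelian group, two commuting elements cannot
  generate the group (it would be abelian), so the commuting graph is always a subgraph of the
  non-generating graph, and the reverse inclusion says exactly that any two elements lying in a
  common proper subgroup commute.\<close>

definition centralizer :: "('a, 'b) monoid_scheme \<Rightarrow> 'a set \<Rightarrow> 'a set" where
  "centralizer G A = {g \<in> carrier G. \<forall>a\<in>A. g \<otimes>\<^bsub>G\<^esub> a = a \<otimes>\<^bsub>G\<^esub> g}"

lemma (in group) subgroup_centralizer:
  assumes "A \<subseteq> carrier G"
  shows "subgroup (centralizer G A) G"
proof (rule subgroupI)
  show "centralizer G A \<subseteq> carrier G" by (auto simp: centralizer_def)
  have "\<one> \<in> centralizer G A" using assms by (auto simp: centralizer_def)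
  then show "centralizer G A \<noteq> {}" by blast
next
  fix g assume "g \<in> centralizer G A"
  then have g: "g \<in> carrier G" and comm: "\<And>a. a \<in> A \<Longrightarrow> g \<otimes> a = a \<otimes> g"
    by (auto simp: centralizer_def)
  have "inv g \<otimes> a = a \<otimes> inv g" if a: "a \<in> A" for a
  proof -
    have a_carr: "a \<in> carrier G" using a assms by blast
    have "inv g \<otimes> a = inv g \<otimes> (a \<otimes> g) \<otimes> inv g"
      using g a_carr by (simp add: m_assoc)
    also have "\<dots> = inv g \<otimes> (g \<otimes> a) \<otimes> inv g" using comm a by simp
    also have "\<dots> = a \<otimes> inv g" using g a_carr by (simp add: m_assoc [symmetric])
    finally show ?thesis .
  qed
  then show "inv g \<in> centralizer G A" using g by (simp add: centralizer_def)
next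
  fix g h assume "g \<in> centralizer G A" "h \<in> centralizer G A"
  then have gh: "g \<in> carrier G" "h \<in> carrier G"
    and comm: "\<And>a. a \<in> A \<Longrightarrow> g \<otimes> a = a \<otimes> g" "\<And>a. a \<in> A \<Longrightarrow> h \<otimes> a = a \<otimes> h"
    by (auto simp: centralizer_def)
  have "g \<otimes> h \<otimes> a = a \<otimes> (g \<otimes> h)" if a: "a \<in> A" for a
  proof -
    have a_carr: "a \<in> carrier G" using a assms by blast
    have "g \<otimes> h \<otimes> a = g \<otimes> (a \<otimes> h)" using gh a_carr comm a by (simp add: m_assoc)
    also have "\<dots> = a \<otimes> (g \<otimes> h)" using gh a_carr comm a by (simp add: m_assoc [symmetric])
    finally show ?thesis .
  qed
  then show "g \<otimes> h \<in> centralizer G A" using gh by (simp add: centralizer_def)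
qed

lemma (in group) generate_commuting_set_commutes:
  assumes S: "S \<subseteq> carrier G" and comm: "\<And>a b. a \<in> S \<Longrightarrow> b \<in> S \<Longrightarrow> a \<otimes> b = b \<otimes> a"
    and x: "x \<in> generate G S" and y: "y \<in> generate G S"
  shows "x \<otimes> y = y \<otimes> x"
proof -
  have "generate G S \<subseteq> centralizer G S"
    using S comm by (intro generate_subgroup_incl subgroup_centralizer) (auto simp: centralizer_def)
  then have "S \<subseteq> centralizer G (generate G S)"
    using S by (auto simp: centralizer_def)
  then have "generate G S \<subseteq> centralizer G (generate G S)"
    using S by (intro generate_subgroup_incl subgroup_centralizer generate_incl)
  then show ?thesis using x y by (auto simp: centralizer_def)
qed

lemma (in group) comm_group_if_generated_by_commuting_pair:
  assumes "x \<in> carrier G" "y \<in> carrier G" "x \<otimes> y = y \<otimes> x"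
    and "generate G {x, y} = carrier G"
  shows "comm_group G"
proof (rule group_comm_groupI)
  fix a b assume "a \<in> carrier G" "b \<in> carrier G"
  moreover have "a' \<otimes> b' = b' \<otimes> a'" if "a' \<in> {x, y}" "b' \<in> {x, y}" for a' b'
    using that assms(3) by auto
  ultimately show "a \<otimes> b = b \<otimes> a"
    using assms generate_commuting_set_commutes [of "{x, y}" a b] by auto
qed

lemma (in group) pow_graph_null_iff_trivial:
  "null_graph (carrier G) (pow_adj G) \<longleftrightarrow> carrier G = {\<one>}"
proof
  assume null: "null_graph (carrier G) (pow_adj G)"
  show "carrier G = {\<one>}"
  proof (rule ccontr)
    assume "carrier G \<noteq> {\<one>}"
    then obtain x where x: "x \<in> carrier G" "x \<noteq> \<one>" by blast
    have "\<one> = x [^] (0::int)" by simp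
    then have "pow_adj G x \<one>" unfolding pow_adj_def using x(2) by blast
    then show False using null x(1) unfolding null_graph_def by blast
  qed
qed (auto simp: null_graph_def pow_adj_def)

lemma (in group) two_generated_iff_distinct_pair:
  assumes "carrier G \<noteq> {\<one>}"
  shows "two_generated G \<longleftrightarrow>
    (\<exists>x\<in>carrier G. \<exists>y\<in>carrier G. x \<noteq> y \<and> generate G {x, y} = carrier G)"
proof
  assume "two_generated G"
  then obtain x y where xy: "x \<in> carrier G" "y \<in> carrier G" "generate G {x, y} = carrier G"
    unfolding two_generated_def by blast
  show "\<exists>x\<in>carrier G. \<exists>y\<in>carrier G. x \<noteq> y \<and> generate G {x, y} = carrier G"
  proof (cases "x = y")
    case True
    then have gen_x: "generate G {x} = carrier G" using xy(3) by simp
    then have "x \<noteq> \<one>" using generate_one assms by auto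
    moreover have "generate G {x, \<one>} = carrier G"
    proof (rule equalityI)
      show "generate G {x, \<one>} \<subseteq> carrier G" using xy(1) by (intro generate_incl) auto
      show "carrier G \<subseteq> generate G {x, \<one>}" using gen_x mono_generate [of "{x}"] by auto
    qed
    ultimately show ?thesis using xy(1) by blast
  qed (use xy in blast)
qed (auto simp: two_generated_def)

lemma (in group) ngen_graph_complete_iff_not_two_generated:
  assumes "carrier G \<noteq> {\<one>}"
  shows "complete_graph (carrier G) (ngen_adj G) \<longleftrightarrow> \<not> two_generated G"
  using two_generated_iff_distinct_pair [OF assms]
  unfolding complete_graph_def ngen_adj_def by blast

lemma (in comm_group) ngen_graph_eq_com_graph_iff_complete:
  "same_graph (carrier G) (ngen_adj G) (com_adj G) \<longleftrightarrow> complete_graph (carrier G) (ngen_adj G)"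
  unfolding same_graph_def complete_graph_def com_adj_def ngen_adj_def
  using m_comm by blast

lemma (in group) ngen_adj_imp_com_adj_iff_proper_subgroups_abelian:
  "(\<forall>x\<in>carrier G. \<forall>y\<in>carrier G. ngen_adj G x y \<longrightarrow> com_adj G x y) \<longleftrightarrow>
   (\<forall>H. subgroup H G \<and> H \<noteq> carrier G \<longrightarrow> (\<forall>x\<in>H. \<forall>y\<in>H. x \<otimes> y = y \<otimes> x))"
proof (intro iffI allI impI ballI)
  fix H x y
  assume ngen_com: "\<forall>x\<in>carrier G. \<forall>y\<in>carrier G. ngen_adj G x y \<longrightarrow> com_adj G x y"
    and H: "subgroup H G \<and> H \<noteq> carrier G" and xy: "x \<in> H" "y \<in> H"
  show "x \<otimes> y = y \<otimes> x"
  proof (cases "x = y")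
    case False
    have "generate G {x, y} \<subseteq> H" using H xy by (intro generate_subgroup_incl) auto
    with H have "generate G {x, y} \<noteq> carrier G" using subgroup.subset by blast
    with False have "ngen_adj G x y" by (simp add: ngen_adj_def)
    moreover have "x \<in> carrier G" "y \<in> carrier G" using H xy subgroup.subset by blast+
    ultimately have "com_adj G x y" using ngen_com by blast
    then show ?thesis by (simp add: com_adj_def)
  qed simp
next
  fix x y
  assume abelian: "\<forall>H. subgroup H G \<and> H \<noteq> carrier G \<longrightarrow> (\<forall>x\<in>H. \<forall>y\<in>H. x \<otimes> y = y \<otimes> x)"
    and xy: "x \<in> carrier G" "y \<in> carrier G" and ngen: "ngen_adj G x y"
  have "subgroup (generate G {x, y}) G" using xy by (intro generate_is_subgroup) auto
  moreover have "generate G {x, y} \<noteq> carrier G" using ngen by (simp add: ngen_adj_def)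
  ultimately have "\<forall>a\<in>generate G {x, y}. \<forall>b\<in>generate G {x, y}. a \<otimes> b = b \<otimes> a"
    using abelian by blast
  moreover have "x \<in> generate G {x, y}" "y \<in> generate G {x, y}"
    by (auto intro: generate.incl)
  ultimately have "x \<otimes> y = y \<otimes> x" by blast
  then show "com_adj G x y" using ngen by (simp add: com_adj_def ngen_adj_def)
qed

lemma (in group) com_adj_imp_ngen_adj:
  assumes "\<not> comm_group G" "x \<in> carrier G" "y \<in> carrier G" "com_adj G x y"
  shows "ngen_adj G x y"
  using assms comm_group_if_generated_by_commuting_pair [of x y]
  unfolding com_adj_def ngen_adj_def by blast

lemma (in group) ngen_graph_eq_com_graph_iff_minimal_nonabelian:
  assumes "\<not> comm_group G"
  shows "same_graph (carrier G) (ngen_adj G) (com_adj G) \<longleftrightarrow> minimal_nonabelian G"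
proof -
  have "same_graph (carrier G) (ngen_adj G) (com_adj G) \<longleftrightarrow>
      (\<forall>x\<in>carrier G. \<forall>y\<in>carrier G. ngen_adj G x y \<longrightarrow> com_adj G x y)"
    using com_adj_imp_ngen_adj [OF assms] unfolding same_graph_def by blast
  then show ?thesis
    using assms is_group ngen_adj_imp_com_adj_iff_proper_subgroups_abelian
    unfolding minimal_nonabelian_def by simp
qed

theorem mainTheorem4:
  fixes G :: "('a, 'b) monoid_scheme"
  assumes "group G" and "finite (carrier G)"
  shows "(null_graph (carrier G) (pow_adj G) \<longleftrightarrow> carrier G = {\<one>\<^bsub>G\<^esub>})
       \<and> (carrier G \<noteq> {\<one>\<^bsub>G\<^esub>} \<longrightarrow>
            (complete_graph (carrier G) (ngen_adj G) \<longleftrightarrow> \<not> two_generated G))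
       \<and> (carrier G \<noteq> {\<one>\<^bsub>G\<^esub>} \<longrightarrow>
            (same_graph (carrier G) (ngen_adj G) (com_adj G) \<longleftrightarrow>
               ((comm_group G \<and> \<not> two_generated G) \<or> minimal_nonabelian G)))"
proof -
  interpret group G by (fact assms(1))
  have "same_graph (carrier G) (ngen_adj G) (com_adj G) \<longleftrightarrow>
      (comm_group G \<and> \<not> two_generated G) \<or> minimal_nonabelian G"
    if nontrivial: "carrier G \<noteq> {\<one>\<^bsub>G\<^esub>}"
  proof (cases "comm_group G")
    case True
    then have "\<not> minimal_nonabelian G" by (simp add: minimal_nonabelian_def)
    with True show ?thesis
      using comm_group.ngen_graph_eq_com_graph_iff_complete
        ngen_graph_complete_iff_not_two_generated [OF nontrivial] by blast
  qed (simp add: ngen_graph_eq_com_graph_iff_minimal_nonabelian)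
  then show ?thesis
    using pow_graph_null_iff_trivial ngen_graph_complete_iff_not_two_generated by blast
qed

end
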